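(* In BID-logic the following logical equivalences hold: (1) $=\!\!(t_1,\dots,t_n)\equiv \big(=\!\!(t_1)\wedge\dots\wedge=\!\!(t_{n-1})\big)\to=\!\!(t_n)$ for any terms $t_1,\dots,t_n$; (2) $\neg\phi\equiv\phi\to\bot$ whenever $\phi$ is an atom, i.e. a first-order atomic formula or a dependence atom $=\!\!(t_1,\dots,t_n)$ (where $\neg\phi$ is the corresponding negated atomic formula, resp. $\neg=\!\!(t_1,\dots,t_n)$); (3) $(\phi\to\bot)\to\bot\equiv\phi$ whenever $\phi$ is a flat formula; (4) $\phi\otimes\psi\equiv(\phi\to\bot)\to\psi$ whenever $\phi$ and $\psi$ are flat formulas. Here $\phi\equiv\psi$ means that for every suitable structure $M$ and every team $X$ of $M$ with $dom(X)\supseteq Fv(\phi)\cup Fv(\psi)$, $M\models_X\phi$ iff $M\models_X\psi$.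
   Context: Fix a first-order signature; structures have non-empty domains. An assignment on $M$ is a function from a finite set of variables into the domain of $M$; $s(a/x)$ agrees with $s$ except that it sends $x$ to $a$. A team $X$ of $M$ is a set of assignments all with the same domain $dom(X)$. For $F:X\to M$, $X(F/x)=\{s(F(s)/x):s\in X\}$; $X(M/x)=\{s(a/x):a\in M,s\in X\}$. Formulas of BID-logic: $\phi::=\alpha\mid=\!\!(t_1,\dots,t_n)\mid\neg=\!\!(t_1,\dots,t_n)\mid\bot\mid\phi\wedge\phi\mid\phi\otimes\phi\mid\phi\veebar\phi\mid\phi\to\phi\mid\phi\multimap\phi\mid\forall x\phi\mid\exists x\phi$, with $\alpha$ a first-order literal (atomic or negated atomic formula) and $t_i$ terms; $Fv(=\!\!(t_1,\dots,t_n))$ is the set of variables in the $t_i$, otherwise free variables as usual. Semantics for teams $X$ with $dom(X)\supseteq$ free variables: $M\models_X\alpha$ iff $M\models_s\alpha$ for all $s\in X$; $M\models_X=\!\!(t_1,\dots,t_n)$ iff for all $s,s'\in X$ with $s(t_i)=s'(t_i)$ for all $i<n$, $s(t_n)=s'(t_n)$ (so $M\models_X=\!\!(t)$ iff $t$ takes a single value on $X$); $M\models_X\neg=\!\!(\dots)$ iff $X=\emptyset$; $M\models_X\bot$ iff $X=\emptyset$; $\wedge$ as usual; $M\models_X\phi\otimes\psi$ iff $X=Y\cup Z$ for some $Y,Z\subseteq X$ with $M\models_Y\phi$, $M\models_Z\psi$; $M\models_X\phi\veebar\psi$ iff $M\models_X\phi$ or $M\models_X\psi$; $M\models_X\phi\to\psi$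 iff for all $Y\subseteq X$, $M\models_Y\phi$ implies $M\models_Y\psi$; $M\models_X\phi\multimap\psi$ iff for all teams $Y$ with $dom(Y)=dom(X)$, $M\models_Y\phi$ implies $M\models_{X\cup Y}\psi$; $M\models_X\exists x\phi$ iff $M\models_{X(F/x)}\phi$ for some $F:X\to M$; $M\models_X\forall x\phi$ iff $M\models_{X(M/x)}\phi$. A formula $\phi$ is flat if for all suitable $M$ and teams $X$: $M\models_X\phi$ iff $M\models_{\{s\}}\phi$ for all $s\in X$. *)

theory Defs
  imports Main
begin

datatype ('f, 'v) trm = Var 'v | Fn 'f "('f, 'v) trm list"

datatype ('f, 'r, 'v) atom =
    Eq "('f, 'v) trm" "('f, 'v) trm"
  | Rel 'r "('f, 'v) trm list"

datatype ('f, 'r, 'v) bid =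
    Lit bool "('f, 'r, 'v) atom"      \<comment> \<open>Lit True a = a, Lit False a = negated atom\<close>
  | Dep "('f, 'v) trm list"
  | NDep "('f, 'v) trm list"
  | Bot
  | And "('f, 'r, 'v) bid" "('f, 'r, 'v) bid"
  | Tensor "('f, 'r, 'v) bid" "('f, 'r, 'v) bid"
  | Veebar "('f, 'r, 'v) bid" "('f, 'r, 'v) bid"
  | Imp "('f, 'r, 'v) bid" "('f, 'r, 'v) bid"
  | Limp "('f, 'r, 'v) bid" "('f, 'r, 'v) bid"
  | All 'v "('f, 'r, 'v) bid"
  | Ex 'v "('f, 'r, 'v) bid"

fun tvars :: "('f, 'v) trm \<Rightarrow> 'v set" where
  "tvars (Var x) = {x}"
| "tvars (Fn f ts) = (\<Union>t\<in>set ts. tvars t)"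

primrec avars :: "('f, 'r, 'v) atom \<Rightarrow> 'v set" where
  "avars (Eq t u) = tvars t \<union> tvars u"
| "avars (Rel r ts) = (\<Union>t\<in>set ts. tvars t)"

primrec Fv :: "('f, 'r, 'v) bid \<Rightarrow> 'v set" where
  "Fv (Lit b a) = avars a"
| "Fv (Dep ts) = (\<Union>t\<in>set ts. tvars t)"
| "Fv (NDep ts) = (\<Union>t\<in>set ts. tvars t)"
| "Fv Bot = {}"
| "Fv (And p q) = Fv p \<union> Fv q"
| "Fv (Tensor p q) = Fv p \<union> Fv q"
| "Fv (Veebar p q) = Fv p \<union> Fv q"
| "Fv (Imp p q) = Fv p \<union> Fv q"
| "Fv (Limp p q) = Fv p \<union> Fv q"
| "Fv (All x p) = Fv p - {x}"
| "Fv (Ex x p) = Fv p - {x}"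

fun big_and :: "('f, 'r, 'v) bid list \<Rightarrow> ('f, 'r, 'v) bid" where
  "big_and [] = Bot"   \<comment> \<open>never used: only applied to nonempty lists\<close>
| "big_and [p] = p"
| "big_and (p # q # qs) = And p (big_and (q # qs))"

record ('f, 'r, 'a) struct =
  univ :: "'a set"
  fint :: "'f \<Rightarrow> 'a list \<Rightarrow> 'a"
  rint :: "'r \<Rightarrow> 'a list set"

definition wf_struct :: "('f, 'r, 'a) struct \<Rightarrow> bool" where
  "wf_struct M \<longleftrightarrow> univ M \<noteq> {} \<and>
     (\<forall>f as. set as \<subseteq> univ M \<longrightarrow> fint M f as \<in> univ M)"

type_synonym ('v, 'a) asg = "'v \<Rightarrow> 'a option"

definition is_team :: "('f, 'r, 'a) struct \<Rightarrow> 'v set \<Rightarrow> ('v, 'a) asg set \<Rightarrow> bool" where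
  "is_team M V X \<longleftrightarrow> (\<forall>s\<in>X. dom s = V \<and> ran s \<subseteq> univ M)"

fun teval :: "('f, 'r, 'a) struct \<Rightarrow> ('v, 'a) asg \<Rightarrow> ('f, 'v) trm \<Rightarrow> 'a" where
  "teval M s (Var x) = the (s x)"
| "teval M s (Fn f ts) = fint M f (map (teval M s) ts)"

primrec asat :: "('f, 'r, 'a) struct \<Rightarrow> ('v, 'a) asg \<Rightarrow> ('f, 'r, 'v) atom \<Rightarrow> bool" where
  "asat M s (Eq t u) = (teval M s t = teval M s u)"
| "asat M s (Rel r ts) = (map (teval M s) ts \<in> rint M r)"

definition dep_sat :: "('f, 'r, 'a) struct \<Rightarrow> ('v, 'a) asg set \<Rightarrow> ('f, 'v) trm list \<Rightarrow> bool" where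
  "dep_sat M X ts \<longleftrightarrow> (\<forall>s\<in>X. \<forall>s'\<in>X.
      (\<forall>t\<in>set (butlast ts). teval M s t = teval M s' t) \<longrightarrow>
      teval M s (last ts) = teval M s' (last ts))"

primrec sat :: "('f, 'r, 'a) struct \<Rightarrow> 'v set \<Rightarrow> ('v, 'a) asg set \<Rightarrow> ('f, 'r, 'v) bid \<Rightarrow> bool" where
  "sat M V X (Lit b a) = (\<forall>s\<in>X. asat M s a = b)"
| "sat M V X (Dep ts) = dep_sat M X ts"
| "sat M V X (NDep ts) = (X = {})"
| "sat M V X Bot = (X = {})"
| "sat M V X (And p q) = (sat M V X p \<and> sat M V X q)"
| "sat M V X (Tensor p q) = (\<exists>Y Z. Y \<subseteq> X \<and> Z \<subseteq> X \<and> X = Y \<union> Z \<and> sat M V Y p \<and> sat M V Z q)"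
| "sat M V X (Veebar p q) = (sat M V X p \<or> sat M V X q)"
| "sat M V X (Imp p q) = (\<forall>Y. Y \<subseteq> X \<longrightarrow> sat M V Y p \<longrightarrow> sat M V Y q)"
| "sat M V X (Limp p q) = (\<forall>Y. is_team M V Y \<longrightarrow> sat M V Y p \<longrightarrow> sat M V (X \<union> Y) q)"
| "sat M V X (All x p) = sat M (insert x V) {s(x \<mapsto> a) | s a. s \<in> X \<and> a \<in> univ M} p"
| "sat M V X (Ex x p) = (\<exists>F. (\<forall>s\<in>X. F s \<in> univ M) \<and>
                          sat M (insert x V) ((\<lambda>s. s(x \<mapsto> F s)) ` X) p)"

definition suitable :: "('f, 'r, 'a) struct \<Rightarrow> 'v set \<Rightarrow> ('v, 'a) asg set \<Rightarrow> bool" where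
  "suitable M V X \<longleftrightarrow> wf_struct M \<and> finite V \<and> is_team M V X"

definition flat :: "('f, 'r, 'v) bid \<Rightarrow> 'a itself \<Rightarrow> bool" where
  "flat p (_ :: 'a itself) \<longleftrightarrow> (\<forall>(M :: ('f, 'r, 'a) struct) V X.
     suitable M V X \<and> Fv p \<subseteq> V \<longrightarrow> (sat M V X p \<longleftrightarrow> (\<forall>s\<in>X. sat M V {s} p)))"

definition bid_equiv :: "('f, 'r, 'v) bid \<Rightarrow> ('f, 'r, 'v) bid \<Rightarrow> 'a itself \<Rightarrow> bool" where
  "bid_equiv p q (_ :: 'a itself) \<longleftrightarrow> (\<forall>(M :: ('f, 'r, 'a) struct) V X.
     suitable M V X \<and> Fv p \<union> Fv q \<subseteq> V \<longrightarrow> (sat M V X p \<longleftrightarrow> sat M V X q))"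

end

theory Submission
  imports Defs
begin

text \<open>The intuitionistic implication quantifies over subteams, so \<open>\<phi> \<rightarrow> \<bottom>\<close> holds in a team
  iff no nonempty subteam satisfies \<open>\<phi>\<close>. For atoms and flat formulas, satisfaction on a subteam
  passes down to its singletons, and \<open>\<phi> \<rightarrow> \<bottom>\<close> becomes ``every assignment falsifies \<open>\<phi>\<close>'';
  for flat formulas all four connectives involved then reduce to single assignments. A
  dependence atom \<open>=(t\<^sub>1,\<dots>,t\<^sub>n)\<close> says that \<open>t\<^sub>n\<close> is constant on every subteam on which
  \<open>t\<^sub>1,\<dots>,t\<^sub>n\<^sub>-\<^sub>1\<close> are constant; two-element subteams suffice to recover it.\<close>

lemma suitable_subteam: "suitable M V X \<Longrightarrow> Y \<subseteq> X \<Longrightarrow> suitable M V Y"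
  unfolding suitable_def is_team_def by (meson subsetD)

lemma flat_subteamD:
  fixes A :: "'a itself" and M :: "('f, 'r, 'a) struct"
  assumes "flat p A" "suitable M V X" "Fv p \<subseteq> V" "Y \<subseteq> X"
  shows "sat M V Y p \<longleftrightarrow> (\<forall>s\<in>Y. sat M V {s} p)"
  using assms(1) suitable_subteam[OF assms(2,4)] assms(3) unfolding flat_def by blast

lemma sat_Imp_downward_closed: "sat M V X (Imp p q) \<Longrightarrow> Y \<subseteq> X \<Longrightarrow> sat M V Y (Imp p q)"
  by (simp only: sat.simps(8)) blast

lemma sat_Imp_Bot_iff:
  assumes "\<And>Y. Y \<subseteq> X \<Longrightarrow> sat M V Y p \<Longrightarrow> \<forall>s\<in>Y. sat M V {s} p"
  shows "sat M V X (Imp p Bot) \<longleftrightarrow> (\<forall>s\<in>X. \<not> sat M V {s} p)"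
proof
  assume "sat M V X (Imp p Bot)"
  then show "\<forall>s\<in>X. \<not> sat M V {s} p" by auto
next
  assume none: "\<forall>s\<in>X. \<not> sat M V {s} p"
  show "sat M V X (Imp p Bot)"
    using assms none by (fastforce simp: subset_iff)
qed

lemma sat_Imp_Bot_singleton: "sat M V {s} (Imp p Bot) \<longleftrightarrow> \<not> sat M V {s} p"
  by (auto simp: subset_singleton_iff)

lemma sat_Imp_Bot_flat:
  fixes A :: "'a itself" and M :: "('f, 'r, 'a) struct"
  assumes "flat p A" "suitable M V X" "Fv p \<subseteq> V"
  shows "sat M V X (Imp p Bot) \<longleftrightarrow> (\<forall>s\<in>X. \<not> sat M V {s} p)"
  using flat_subteamD[OF assms] by (intro sat_Imp_Bot_iff) blast

lemma sat_Tensor_flat: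
  fixes A :: "'a itself" and M :: "('f, 'r, 'a) struct"
  assumes p: "flat p A" "Fv p \<subseteq> V" and q: "flat q A" "Fv q \<subseteq> V" and X: "suitable M V X"
  shows "sat M V X (Tensor p q) \<longleftrightarrow> (\<forall>s\<in>X. sat M V {s} p \<or> sat M V {s} q)"
proof
  assume "sat M V X (Tensor p q)"
  then obtain Y Z where YZ: "Y \<subseteq> X" "Z \<subseteq> X" "X = Y \<union> Z" and "sat M V Y p" "sat M V Z q"
    unfolding sat.simps(6) by blast
  then have "\<forall>s\<in>Y. sat M V {s} p" "\<forall>s\<in>Z. sat M V {s} q"
    using flat_subteamD[OF p(1) X p(2) YZ(1)] flat_subteamD[OF q(1) X q(2) YZ(2)] by blast+
  with YZ(3) show "\<forall>s\<in>X. sat M V {s} p \<or> sat M V {s} q" by blast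
next
  assume split: "\<forall>s\<in>X. sat M V {s} p \<or> sat M V {s} q"
  define Y where "Y = {s\<in>X. sat M V {s} p}"
  define Z where "Z = {s\<in>X. sat M V {s} q}"
  have "Y \<subseteq> X" "Z \<subseteq> X" "X = Y \<union> Z" using split unfolding Y_def Z_def by blast+
  moreover have "sat M V Y p" using flat_subteamD[OF p(1) X p(2) \<open>Y \<subseteq> X\<close>] unfolding Y_def by blast
  moreover have "sat M V Z q" using flat_subteamD[OF q(1) X q(2) \<open>Z \<subseteq> X\<close>] unfolding Z_def by blast
  ultimately show "sat M V X (Tensor p q)" unfolding sat.simps(6) by blast
qed

lemma sat_Imp_Imp_Bot_flat:
  fixes A :: "'a itself" and M :: "('f, 'r, 'a) struct"
  assumes p: "flat p A" "Fv p \<subseteq> V" and q: "flat q A" "Fv q \<subseteq> V" and X: "suitable M V X"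
  shows "sat M V X (Imp (Imp p Bot) q) \<longleftrightarrow> (\<forall>s\<in>X. \<not> sat M V {s} p \<longrightarrow> sat M V {s} q)"
proof
  assume imp: "sat M V X (Imp (Imp p Bot) q)"
  show "\<forall>s\<in>X. \<not> sat M V {s} p \<longrightarrow> sat M V {s} q"
  proof (intro ballI impI)
    fix s assume "s \<in> X" "\<not> sat M V {s} p"
    then have "{s} \<subseteq> X" "sat M V {s} (Imp p Bot)" using sat_Imp_Bot_singleton by blast+
    with imp show "sat M V {s} q" by (simp only: sat.simps(8))
  qed
next
  assume pointwise: "\<forall>s\<in>X. \<not> sat M V {s} p \<longrightarrow> sat M V {s} q"
  show "sat M V X (Imp (Imp p Bot) q)"
  proof (unfold sat.simps(8)[of M V X], intro allI impI)
    fix Y assume Y: "Y \<subseteq> X" and "sat M V Y (Imp p Bot)"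
    then have "\<forall>s\<in>Y. \<not> sat M V {s} p"
      using sat_Imp_Bot_flat[OF p(1) suitable_subteam[OF X Y] p(2)] by blast
    then show "sat M V Y q"
      using pointwise Y flat_subteamD[OF q(1) X q(2) Y] by blast
  qed
qed

lemma sat_Dep_singleton: "sat M V {s} (Dep ts)"
  by (simp add: dep_sat_def)

lemma sat_Dep_single: "sat M V X (Dep [u]) \<longleftrightarrow> (\<forall>s\<in>X. \<forall>s'\<in>X. teval M s u = teval M s' u)"
  by (simp add: dep_sat_def)

lemma sat_Dep_snoc:
  "sat M V X (Dep (ts @ [t])) \<longleftrightarrow> (\<forall>s\<in>X. \<forall>s'\<in>X.
     (\<forall>u\<in>set ts. teval M s u = teval M s' u) \<longrightarrow> teval M s t = teval M s' t)"
  by (simp add: dep_sat_def)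

lemma sat_big_and_Dep_singles:
  "ts \<noteq> [] \<Longrightarrow> sat M V X (big_and (map (\<lambda>u. Dep [u]) ts)) \<longleftrightarrow>
     (\<forall>u\<in>set ts. \<forall>s\<in>X. \<forall>s'\<in>X. teval M s u = teval M s' u)"
proof (induction ts rule: induct_list012)
  case (3 u u' us)
  then show ?case by (simp only: list.map big_and.simps sat.simps(5) sat_Dep_single) simp
qed (simp_all only: list.map big_and.simps sat_Dep_single, simp_all)

lemma bid_equiv_Dep_Imp_big_and:
  assumes "ts \<noteq> []"
  shows "bid_equiv (Dep (ts @ [t]) :: ('f, 'r, 'v) bid)
           (Imp (big_and (map (\<lambda>u. Dep [u]) ts)) (Dep [t])) A"
  unfolding bid_equiv_def
proof (intro allI impI)
  fix M :: "('f, 'r, 'a) struct" and V X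
  note big_and = sat_big_and_Dep_singles[OF assms]
  show "sat M V X (Dep (ts @ [t])) \<longleftrightarrow> sat M V X (Imp (big_and (map (\<lambda>u. Dep [u]) ts)) (Dep [t]))"
  proof
    assume dep: "sat M V X (Dep (ts @ [t]))"
    show "sat M V X (Imp (big_and (map (\<lambda>u. Dep [u]) ts)) (Dep [t]))"
    proof (simp only: sat.simps(8), intro allI impI)
      fix Y assume "Y \<subseteq> X" "sat M V Y (big_and (map (\<lambda>u. Dep [u]) ts))"
      then show "sat M V Y (Dep [t])"
        using dep unfolding big_and sat_Dep_single sat_Dep_snoc by blast
    qed
  next
    assume imp: "sat M V X (Imp (big_and (map (\<lambda>u. Dep [u]) ts)) (Dep [t]))"
    show "sat M V X (Dep (ts @ [t]))"
      unfolding sat_Dep_snoc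
    proof (intro ballI impI)
      fix s s' assume ss': "s \<in> X" "s' \<in> X" and agree: "\<forall>u\<in>set ts. teval M s u = teval M s' u"
      have "sat M V {s, s'} (big_and (map (\<lambda>u. Dep [u]) ts))"
        unfolding big_and using agree by auto
      moreover have "{s, s'} \<subseteq> X" using ss' by simp
      ultimately have "sat M V {s, s'} (Dep [t])" using imp by (simp only: sat.simps(8))
      then show "teval M s t = teval M s' t" unfolding sat_Dep_single by blast
    qed
  qed
qed

lemma bid_equiv_Lit_False_Imp_Bot:
  "bid_equiv (Lit False a :: ('f, 'r, 'v) bid) (Imp (Lit True a) Bot) A"
  unfolding bid_equiv_def
proof (intro allI impI)
  fix M :: "('f, 'r, 'a) struct" and V X
  have "sat M V X (Imp (Lit True a) Bot) \<longleftrightarrow> (\<forall>s\<in>X. \<not> sat M V {s} (Lit True a))"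
    by (rule sat_Imp_Bot_iff) simp
  then show "sat M V X (Lit False a) \<longleftrightarrow> sat M V X (Imp (Lit True a) Bot)" by simp
qed

lemma bid_equiv_NDep_Imp_Bot:
  "bid_equiv (NDep ts :: ('f, 'r, 'v) bid) (Imp (Dep ts) Bot) A"
  unfolding bid_equiv_def
proof (intro allI impI)
  fix M :: "('f, 'r, 'a) struct" and V X
  have "sat M V X (Imp (Dep ts) Bot) \<longleftrightarrow> (\<forall>s\<in>X. \<not> sat M V {s} (Dep ts))"
    by (rule sat_Imp_Bot_iff) (simp only: sat_Dep_singleton, blast)
  then show "sat M V X (NDep ts) \<longleftrightarrow> sat M V X (Imp (Dep ts) Bot)"
    by (simp only: sat_Dep_singleton sat.simps(3)) blast
qed

lemma bid_equiv_double_neg_flat: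
  fixes A :: "'a itself" and p :: "('f, 'r, 'v) bid"
  assumes "flat p A"
  shows "bid_equiv (Imp (Imp p Bot) Bot) p A"
  unfolding bid_equiv_def
proof (intro allI impI)
  fix M :: "('f, 'r, 'a) struct" and V X
  assume "suitable M V X \<and> Fv (Imp (Imp p Bot) Bot) \<union> Fv p \<subseteq> V"
  then have X: "suitable M V X" and fv: "Fv p \<subseteq> V" by auto
  have "sat M V X (Imp (Imp p Bot) Bot) \<longleftrightarrow> (\<forall>s\<in>X. \<not> sat M V {s} (Imp p Bot))"
    by (rule sat_Imp_Bot_iff) (blast intro: sat_Imp_downward_closed)
  also have "\<dots> \<longleftrightarrow> (\<forall>s\<in>X. sat M V {s} p)" by (simp only: sat_Imp_Bot_singleton not_not)
  also have "\<dots> \<longleftrightarrow> sat M V X p" using flat_subteamD[OF assms X fv] by blast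
  finally show "sat M V X (Imp (Imp p Bot) Bot) \<longleftrightarrow> sat M V X p" .
qed

lemma bid_equiv_Tensor_flat:
  fixes A :: "'a itself" and p q :: "('f, 'r, 'v) bid"
  assumes p: "flat p A" and q: "flat q A"
  shows "bid_equiv (Tensor p q) (Imp (Imp p Bot) q) A"
  unfolding bid_equiv_def
proof (intro allI impI)
  fix M :: "('f, 'r, 'a) struct" and V X
  assume "suitable M V X \<and> Fv (Tensor p q) \<union> Fv (Imp (Imp p Bot) q) \<subseteq> V"
  then have X: "suitable M V X" and fvp: "Fv p \<subseteq> V" and fvq: "Fv q \<subseteq> V" by auto
  show "sat M V X (Tensor p q) \<longleftrightarrow> sat M V X (Imp (Imp p Bot) q)"
    unfolding sat_Tensor_flat[OF p fvp q fvq X] sat_Imp_Imp_Bot_flat[OF p fvp q fvq X] by blast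
qed

theorem lemma3p1:
  fixes A :: "'a itself"
  shows "(\<forall>(ts :: ('f, 'v) trm list) t. ts \<noteq> [] \<longrightarrow>
            bid_equiv (Dep (ts @ [t]) :: ('f, 'r, 'v) bid)
                      (Imp (big_and (map (\<lambda>u. Dep [u]) ts)) (Dep [t])) A)
       \<and> (\<forall>a :: ('f, 'r, 'v) atom. bid_equiv (Lit False a) (Imp (Lit True a) Bot) A)
       \<and> (\<forall>ts :: ('f, 'v) trm list. ts \<noteq> [] \<longrightarrow>
            bid_equiv (NDep ts :: ('f, 'r, 'v) bid) (Imp (Dep ts) Bot) A)
       \<and> (\<forall>p :: ('f, 'r, 'v) bid. flat p A \<longrightarrow> bid_equiv (Imp (Imp p Bot) Bot) p A)
       \<and> (\<forall>p q :: ('f, 'r, 'v) bid. flat p A \<and> flat q A \<longrightarrow>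
            bid_equiv (Tensor p q) (Imp (Imp p Bot) q) A)"
  by (blast intro: bid_equiv_Dep_Imp_big_and bid_equiv_Lit_False_Imp_Bot bid_equiv_NDep_Imp_Bot
      bid_equiv_double_neg_flat bid_equiv_Tensor_flat)

end
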